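(* Let $X=\mathbb{R}^n$ and let $f\colon X\to\mathbb{R}$ be Borel measurable and attain a minimum. Consider the population game $F$ with strategy set $X$ and mean payoff functions $F_\mu(x)=\langle f,\mu\rangle - f(x)$ for $\mu\in\mathcal{P}(X)$. Then a distribution $\mu\in\mathcal{P}(X)$ is a Nash equilibrium of $F$ if and only if $\mu$ is a global minimizer of $\inf_{\nu\in\mathcal{P}(X)}\langle f,\nu\rangle$. Furthermore, $\mu$ is a strict Nash equilibrium of $F$ if and only if $\mu$ is the unique global minimizer of $\inf_{\nu\in\mathcal{P}(X)}\langle f,\nu\rangle$.
   Context: $\mathcal{P}(X)$ denotes the set of Borel probability measures on $X$. For a measure $\mu$ and measurable $h$, $\langle h,\mu\rangle:=\int_X h\,d\mu$, which is allowed to be infinite (since $f$ is bounded below, $\langle f,\mu\rangle\in(-\infty,+\infty]$). A population game with strategy set $X$ assigns to each population state $\mu\in\mathcal{P}(X)$ a payoff function $F_\mu\colon X\to\mathbb{R}$. Equivalently, $F_\mu(x)=\int_X (f(x')-f(x))\,d\mu(x')$. A Nash equilibrium of $F$ is a $\mu\in\mathcal{P}(X)$ with $\langle F_\mu,\nu\rangle\le\langle F_\mu,\mu\rangle$ for all $\nu\in\mathcal{P}(X)$; it is a strict Nash equilibrium if the inequality is strict for all $\nu\neq\mu$. *)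

theory Defs
  imports "HOL-Probability.Probability"
begin

definition prob_measures :: "('a::topological_space) measure set" where
  "prob_measures = {M. prob_space M \<and> sets M = sets borel}"

text \<open>For h bounded
  below (or above) this is the usual, possibly infinite, value of the integral.\<close>
definition pairing :: "('a \<Rightarrow> real) \<Rightarrow> 'a measure \<Rightarrow> ereal" where
  "pairing h \<mu> =
     enn2ereal (\<integral>\<^sup>+ x. ennreal (h x) \<partial>\<mu>) - enn2ereal (\<integral>\<^sup>+ x. ennreal (- h x) \<partial>\<mu>)"

text \<open>A population game assigns to population states real-valued payoff functions.
  It is given as a partial map: None means that no real-valued payoff function
  is defined at that state.\<close>
type_synonym 'a pop_game = "'a measure \<Rightarrow> ('a \<Rightarrow> real) option"

definition nash_eq :: "'a::topological_space pop_game \<Rightarrow> 'a measure \<Rightarrow> bool" where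
  "nash_eq F \<mu> \<longleftrightarrow> \<mu> \<in> prob_measures \<and>
     (\<exists>F\<mu>. F \<mu> = Some F\<mu> \<and> (\<forall>\<nu>\<in>prob_measures. pairing F\<mu> \<nu> \<le> pairing F\<mu> \<mu>))"

definition strict_nash_eq :: "'a::topological_space pop_game \<Rightarrow> 'a measure \<Rightarrow> bool" where
  "strict_nash_eq F \<mu> \<longleftrightarrow> \<mu> \<in> prob_measures \<and>
     (\<exists>F\<mu>. F \<mu> = Some F\<mu> \<and> (\<forall>\<nu>\<in>prob_measures. \<nu> \<noteq> \<mu> \<longrightarrow> pairing F\<mu> \<nu> < pairing F\<mu> \<mu>))"

definition mean_payoff_game :: "('a \<Rightarrow> real) \<Rightarrow> 'a pop_game" where
  "mean_payoff_game f \<mu> =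
     (if \<bar>pairing f \<mu>\<bar> < \<infinity> then Some (\<lambda>x. real_of_ereal (pairing f \<mu>) - f x) else None)"

definition global_minimizer :: "('a::topological_space \<Rightarrow> real) \<Rightarrow> 'a measure \<Rightarrow> bool" where
  "global_minimizer f \<mu> \<longleftrightarrow> \<mu> \<in> prob_measures \<and> (\<forall>\<nu>\<in>prob_measures. pairing f \<mu> \<le> pairing f \<nu>)"

definition unique_global_minimizer :: "('a::topological_space \<Rightarrow> real) \<Rightarrow> 'a measure \<Rightarrow> bool" where
  "unique_global_minimizer f \<mu> \<longleftrightarrow> global_minimizer f \<mu> \<and>
     (\<forall>\<nu>. global_minimizer f \<nu> \<longrightarrow> \<nu> = \<mu>)"

end

theory Submission
  imports Defs
begin

text \<open>For f bounded below, the pairing \<open>\<langle>f,\<nu>\<rangle>\<close> is never \<open>-\<infinity>\<close>, it is affine in f, and it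
  takes the value f x at a Dirac measure. Hence \<open>\<langle>F\<^sub>\<mu>,\<nu>\<rangle> = \<langle>f,\<mu>\<rangle> - \<langle>f,\<nu>\<rangle>\<close> whenever
  \<open>\<langle>f,\<mu>\<rangle>\<close> is finite, so the Nash condition \<open>\<langle>F\<^sub>\<mu>,\<nu>\<rangle> \<le> \<langle>F\<^sub>\<mu>,\<mu>\<rangle> = 0\<close> says exactly that
  \<mu> minimizes \<open>\<langle>f,\<cdot>\<rangle>\<close>, and its strict version that \<mu> is the unique minimizer. Finiteness
  of \<open>\<langle>f,\<mu>\<rangle>\<close> at a minimizer follows by comparing with any Dirac measure.\<close>

lemma pairing_integrable:
  assumes "integrable M h"
  shows "pairing h M = ereal (integral\<^sup>L M h)"
proof -
  obtain r q where "(\<integral>\<^sup>+ x. ennreal (h x) \<partial>M) = ennreal r" "(\<integral>\<^sup>+ x. ennreal (- h x) \<partial>M) = ennreal q"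
    "0 \<le> r" "0 \<le> q" "integral\<^sup>L M h = r - q"
    using integrableE[OF assms] by metis
  then show ?thesis unfolding pairing_def by simp
qed

text \<open>The hypothesis is needed because \<open>\<infinity> - \<infinity> = \<infinity>\<close> in \<^typ>\<open>ereal\<close>.\<close>

lemma pairing_uminus:
  assumes "(\<integral>\<^sup>+ x. ennreal (- h x) \<partial>M) \<noteq> \<infinity>"
  shows "pairing (\<lambda>x. - h x) M = - pairing h M"
  using assms unfolding pairing_def
  by (cases "\<integral>\<^sup>+ x. ennreal (h x) \<partial>M"; cases "\<integral>\<^sup>+ x. ennreal (- h x) \<partial>M") auto

lemma pairing_not_integrable:
  assumes "h \<in> borel_measurable M" "\<not> integrable M h"
    and "(\<integral>\<^sup>+ x. ennreal (- h x) \<partial>M) \<noteq> \<infinity>"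
  shows "pairing h M = \<infinity>"
proof -
  have "(\<integral>\<^sup>+ x. ennreal (h x) \<partial>M) = \<infinity>"
    using assms real_integrable_def by blast
  then show ?thesis
    using assms(3) unfolding pairing_def by (cases "\<integral>\<^sup>+ x. ennreal (- h x) \<partial>M") auto
qed

lemma pairing_gt_MInfty:
  assumes "(\<integral>\<^sup>+ x. ennreal (- h x) \<partial>M) \<noteq> \<infinity>"
  shows "pairing h M > -\<infinity>"
  using assms unfolding pairing_def
  by (cases "\<integral>\<^sup>+ x. ennreal (- h x) \<partial>M"; cases "\<integral>\<^sup>+ x. ennreal (h x) \<partial>M") auto

lemma (in finite_measure) nn_integral_bounded_above_finite:
  assumes "\<And>x. h x \<le> b"
  shows "(\<integral>\<^sup>+ x. ennreal (h x) \<partial>M) \<noteq> \<infinity>"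
proof -
  have "(\<integral>\<^sup>+ x. ennreal (h x) \<partial>M) \<le> (\<integral>\<^sup>+ x. ennreal b \<partial>M)"
    by (intro nn_integral_mono ennreal_leI assms)
  also have "\<dots> < \<infinity>"
    by (simp add: ennreal_mult_eq_top_iff less_top[symmetric])
  finally show ?thesis by simp
qed

lemma (in prob_space) pairing_const_diff:
  assumes "f \<in> borel_measurable M" and "\<And>x. m \<le> f x"
  shows "pairing (\<lambda>x. c - f x) M = ereal c - pairing f M"
proof (cases "integrable M f")
  case True
  then show ?thesis by (simp add: pairing_integrable prob_space)
next
  case False
  have "(\<integral>\<^sup>+ x. ennreal (- f x) \<partial>M) \<noteq> \<infinity>"
    using assms(2) by (intro nn_integral_bounded_above_finite[where b = "- m"]) simp
  then have "pairing f M = \<infinity>"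
    using pairing_not_integrable[OF assms(1) False] by simp
  moreover have neg_part: "(\<integral>\<^sup>+ x. ennreal (- (f x - c)) \<partial>M) \<noteq> \<infinity>"
    using assms(2) by (intro nn_integral_bounded_above_finite[where b = "c - m"]) simp
  moreover have "pairing (\<lambda>x. f x - c) M = \<infinity>"
  proof (rule pairing_not_integrable[OF _ _ neg_part])
    show "\<not> integrable M (\<lambda>x. f x - c)"
      using False Bochner_Integration.integrable_add[of M "\<lambda>x. f x - c" "\<lambda>_. c"] by auto
  qed (use assms(1) in simp)
  ultimately show ?thesis
    using pairing_uminus[where h = "\<lambda>x. f x - c"] by simp
qed

lemma pairing_return:
  assumes "h \<in> borel_measurable M" "x \<in> space M"
  shows "pairing h (return M x) = ereal (h x)"
  using assms unfolding pairing_def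
  by (simp add: nn_integral_return) (cases "0 \<le> h x"; simp add: ennreal_neg zero_ennreal.rep_eq)

lemma return_in_prob_measures: "return borel x \<in> prob_measures"
  unfolding prob_measures_def by (auto intro: prob_space_return)

lemma prob_measures_borel_measurable:
  assumes "\<mu> \<in> prob_measures" "f \<in> borel_measurable borel"
  shows "f \<in> borel_measurable \<mu>"
  using assms measurable_cong_sets unfolding prob_measures_def by blast

lemma pairing_gt_MInfty_if_bounded_below:
  assumes "\<mu> \<in> prob_measures" "\<And>x. m \<le> f x"
  shows "pairing f \<mu> > -\<infinity>"
proof (rule pairing_gt_MInfty)
  interpret prob_space \<mu>
    using assms(1) unfolding prob_measures_def by simp
  show "(\<integral>\<^sup>+ x. ennreal (- f x) \<partial>\<mu>) \<noteq> \<infinity>"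
    using assms(2) by (intro nn_integral_bounded_above_finite[where b = "- m"]) simp
qed

lemma global_minimizer_pairing_finite:
  assumes "f \<in> borel_measurable borel" "\<And>x. m \<le> f x" "global_minimizer f \<mu>"
  shows "\<bar>pairing f \<mu>\<bar> < \<infinity>"
proof -
  fix x
  have "pairing f \<mu> \<le> pairing f (return borel x)"
    using assms(3) return_in_prob_measures unfolding global_minimizer_def by blast
  also have "\<dots> = ereal (f x)"
    using assms(1) by (simp add: pairing_return)
  finally have "pairing f \<mu> < \<infinity>"
    by (cases "pairing f \<mu>") auto
  moreover have "pairing f \<mu> > -\<infinity>"
    using assms(2,3) pairing_gt_MInfty_if_bounded_below unfolding global_minimizer_def by blast
  ultimately show ?thesis by (cases "pairing f \<mu>") auto
qed

lemma pairing_const_diff_prob_measures: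
  assumes "\<nu> \<in> prob_measures" "f \<in> borel_measurable borel" "\<And>x. m \<le> f x"
  shows "pairing (\<lambda>x. c - f x) \<nu> = ereal c - pairing f \<nu>"
proof -
  interpret prob_space \<nu>
    using assms(1) unfolding prob_measures_def by simp
  show ?thesis
    using pairing_const_diff[OF prob_measures_borel_measurable[OF assms(1,2)] assms(3)] .
qed

lemma mean_payoff_game_compare:
  assumes "f \<in> borel_measurable borel" "\<And>x. m \<le> f x"
    and "mean_payoff_game f \<mu> = Some F\<mu>" "\<mu> \<in> prob_measures" "\<nu> \<in> prob_measures"
  shows "pairing F\<mu> \<nu> \<le> pairing F\<mu> \<mu> \<longleftrightarrow> pairing f \<mu> \<le> pairing f \<nu>"
    and "pairing F\<mu> \<nu> < pairing F\<mu> \<mu> \<longleftrightarrow> pairing f \<mu> < pairing f \<nu>"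
proof -
  have "\<bar>pairing f \<mu>\<bar> < \<infinity>"
    using assms(3) unfolding mean_payoff_game_def by (auto split: if_splits)
  then obtain r where r: "pairing f \<mu> = ereal r"
    by (cases "pairing f \<mu>") auto
  then have F\<mu>: "F\<mu> = (\<lambda>x. r - f x)"
    using assms(3) unfolding mean_payoff_game_def by simp
  note F\<mu>_pairing = pairing_const_diff_prob_measures[OF _ assms(1,2), of _ r]
  show "pairing F\<mu> \<nu> \<le> pairing F\<mu> \<mu> \<longleftrightarrow> pairing f \<mu> \<le> pairing f \<nu>"
    and "pairing F\<mu> \<nu> < pairing F\<mu> \<mu> \<longleftrightarrow> pairing f \<mu> < pairing f \<nu>"
    unfolding F\<mu> F\<mu>_pairing[OF assms(4)] F\<mu>_pairing[OF assms(5)] r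
    by (cases "pairing f \<nu>"; simp)+
qed

lemma mean_payoff_game_defined:
  assumes "\<bar>pairing f \<mu>\<bar> < \<infinity>"
  obtains F\<mu> where "mean_payoff_game f \<mu> = Some F\<mu>"
  using assms unfolding mean_payoff_game_def by simp

lemma unique_global_minimizer_iff:
  "unique_global_minimizer f \<mu> \<longleftrightarrow>
     \<mu> \<in> prob_measures \<and> (\<forall>\<nu>\<in>prob_measures. \<nu> \<noteq> \<mu> \<longrightarrow> pairing f \<mu> < pairing f \<nu>)"
proof
  assume unique: "unique_global_minimizer f \<mu>"
  then have \<mu>: "\<mu> \<in> prob_measures" and min: "\<forall>\<rho>\<in>prob_measures. pairing f \<mu> \<le> pairing f \<rho>"
    unfolding unique_global_minimizer_def global_minimizer_def by simp_all
  have "pairing f \<mu> < pairing f \<nu>" if \<nu>: "\<nu> \<in> prob_measures" "\<nu> \<noteq> \<mu>" for \<nu>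
  proof (rule ccontr)
    assume "\<not> pairing f \<mu> < pairing f \<nu>"
    then have "pairing f \<nu> \<le> pairing f \<mu>"
      by (simp add: not_less)
    with min have "\<forall>\<rho>\<in>prob_measures. pairing f \<nu> \<le> pairing f \<rho>"
      using order_trans by blast
    with \<nu>(1) have "global_minimizer f \<nu>"
      unfolding global_minimizer_def by simp
    with unique \<nu>(2) show False
      unfolding unique_global_minimizer_def by simp
  qed
  with \<mu> show "\<mu> \<in> prob_measures \<and> (\<forall>\<nu>\<in>prob_measures. \<nu> \<noteq> \<mu> \<longrightarrow> pairing f \<mu> < pairing f \<nu>)"
    by simp
next
  assume "\<mu> \<in> prob_measures \<and> (\<forall>\<nu>\<in>prob_measures. \<nu> \<noteq> \<mu> \<longrightarrow> pairing f \<mu> < pairing f \<nu>)"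
  then have \<mu>: "\<mu> \<in> prob_measures"
    and strict: "\<And>\<nu>. \<nu> \<in> prob_measures \<Longrightarrow> \<nu> \<noteq> \<mu> \<Longrightarrow> pairing f \<mu> < pairing f \<nu>"
    by simp_all
  have "global_minimizer f \<mu>"
    unfolding global_minimizer_def using \<mu> strict by (metis order.refl less_imp_le)
  moreover have "\<nu> = \<mu>" if "global_minimizer f \<nu>" for \<nu>
  proof (rule ccontr)
    assume "\<nu> \<noteq> \<mu>"
    moreover have "\<nu> \<in> prob_measures" "pairing f \<nu> \<le> pairing f \<mu>"
      using that \<mu> unfolding global_minimizer_def by simp_all
    ultimately show False
      using strict by (simp add: not_less[symmetric])
  qed
  ultimately show "unique_global_minimizer f \<mu>"
    unfolding unique_global_minimizer_def by blast
qed

lemma nash_eq_mean_payoff_game_iff: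
  assumes "f \<in> borel_measurable borel" "\<And>x. m \<le> f x"
  shows "nash_eq (mean_payoff_game f) \<mu> \<longleftrightarrow> global_minimizer f \<mu>"
proof
  assume "nash_eq (mean_payoff_game f) \<mu>"
  then obtain F\<mu> where \<mu>: "\<mu> \<in> prob_measures" and F\<mu>: "mean_payoff_game f \<mu> = Some F\<mu>"
    and nash: "\<forall>\<nu>\<in>prob_measures. pairing F\<mu> \<nu> \<le> pairing F\<mu> \<mu>"
    unfolding nash_eq_def by auto
  have "pairing f \<mu> \<le> pairing f \<nu>" if "\<nu> \<in> prob_measures" for \<nu>
    using nash that mean_payoff_game_compare(1)[OF assms F\<mu> \<mu> that] by blast
  with \<mu> show "global_minimizer f \<mu>"
    unfolding global_minimizer_def by simp
next
  assume min: "global_minimizer f \<mu>"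
  then have \<mu>: "\<mu> \<in> prob_measures"
    unfolding global_minimizer_def by simp
  obtain F\<mu> where F\<mu>: "mean_payoff_game f \<mu> = Some F\<mu>"
    using mean_payoff_game_defined[OF global_minimizer_pairing_finite[OF assms min]] .
  have "pairing F\<mu> \<nu> \<le> pairing F\<mu> \<mu>" if "\<nu> \<in> prob_measures" for \<nu>
    using min that mean_payoff_game_compare(1)[OF assms F\<mu> \<mu> that]
    unfolding global_minimizer_def by blast
  with \<mu> F\<mu> show "nash_eq (mean_payoff_game f) \<mu>"
    unfolding nash_eq_def by simp
qed

lemma strict_nash_eq_mean_payoff_game_iff:
  assumes "f \<in> borel_measurable borel" "\<And>x. m \<le> f x"
  shows "strict_nash_eq (mean_payoff_game f) \<mu> \<longleftrightarrow> unique_global_minimizer f \<mu>"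
proof
  assume "strict_nash_eq (mean_payoff_game f) \<mu>"
  then obtain F\<mu> where \<mu>: "\<mu> \<in> prob_measures" and F\<mu>: "mean_payoff_game f \<mu> = Some F\<mu>"
    and nash: "\<forall>\<nu>\<in>prob_measures. \<nu> \<noteq> \<mu> \<longrightarrow> pairing F\<mu> \<nu> < pairing F\<mu> \<mu>"
    unfolding strict_nash_eq_def by auto
  have "pairing f \<mu> < pairing f \<nu>" if "\<nu> \<in> prob_measures" "\<nu> \<noteq> \<mu>" for \<nu>
    using nash that mean_payoff_game_compare(2)[OF assms F\<mu> \<mu> that(1)] by blast
  with \<mu> show "unique_global_minimizer f \<mu>"
    unfolding unique_global_minimizer_iff by simp
next
  assume min: "unique_global_minimizer f \<mu>"
  then have \<mu>: "\<mu> \<in> prob_measures"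
    and strict: "\<forall>\<nu>\<in>prob_measures. \<nu> \<noteq> \<mu> \<longrightarrow> pairing f \<mu> < pairing f \<nu>"
    unfolding unique_global_minimizer_iff by simp_all
  have "global_minimizer f \<mu>"
    using min unfolding unique_global_minimizer_def by simp
  then obtain F\<mu> where F\<mu>: "mean_payoff_game f \<mu> = Some F\<mu>"
    using mean_payoff_game_defined[OF global_minimizer_pairing_finite[OF assms]] by blast
  have "pairing F\<mu> \<nu> < pairing F\<mu> \<mu>" if "\<nu> \<in> prob_measures" "\<nu> \<noteq> \<mu>" for \<nu>
    using strict that mean_payoff_game_compare(2)[OF assms F\<mu> \<mu> that(1)] by blast
  with \<mu> F\<mu> show "strict_nash_eq (mean_payoff_game f) \<mu>"
    unfolding strict_nash_eq_def by simp
qed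

theorem proposition1:
  fixes f :: "real ^ 'n \<Rightarrow> real" and \<mu> :: "(real ^ 'n) measure"
  assumes "f \<in> borel_measurable borel"
    and "\<exists>x0. \<forall>x. f x0 \<le> f x"
  shows "(nash_eq (mean_payoff_game f) \<mu> \<longleftrightarrow> global_minimizer f \<mu>)
       \<and> (strict_nash_eq (mean_payoff_game f) \<mu> \<longleftrightarrow> unique_global_minimizer f \<mu>)"
proof -
  obtain x0 where "\<And>x. f x0 \<le> f x"
    using assms(2) by blast
  with assms(1) show ?thesis
    using nash_eq_mean_payoff_game_iff strict_nash_eq_mean_payoff_game_iff by blast
qed

end
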